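(* Under the setting where $\widehat E_\varGamma\subseteq E_\varGamma$ is obtained by including each edge independently with probability $p\in(0,1]$ and $\widehat C_M=\frac{1}{pl}\sum_{e\in\widehat E_\varGamma}\eta(e)$, for every $\varepsilon>0$ (and assuming $C_M>0$), $$\Pr\big[|\widehat C_M-C_M|\ge\varepsilon C_M\big]\le\frac{1-p}{p\varepsilon^2}.$$
   Context: A temporal graph $\varGamma=(V_\varGamma,E_\varGamma)$ consists of a finite vertex set $V_\varGamma$ and a finite sequence $E_\varGamma$ of $m$ temporal edges $e=(u,v,t)$ with $u,v\in V_\varGamma$ and timestamp $t\in\mathbb{R}^+$; timestamps are pairwise distinct. A temporal motif $M$ is an ordered sequence of $l$ directed edges $\langle e'_1=(u'_1,v'_1),\dots,e'_l=(u'_l,v'_l)\rangle$ on a vertex set $V_M$ of $k$ vertices, whose underlying graph is connected. Fix $\delta\ge0$. A sequence $S=\langle (w_1,x_1,t_1),\dots,(w_l,x_l,t_l)\rangle$ of $l$ edges of $E_\varGamma$ with $t_1<\dots<t_l$ is a $\delta$-instance of $M$ if there is a bijection $f$ from the vertices of $S$ to $V_M$ with $f(w_i)=u'_i$ and $f(x_i)=v'_i$ for all $i$, and $t_l-t_1\le\delta$. $C_M$ denotes the number of $\delta$-instances of $M$ in $\varGamma$. For $e\in E_\varGamma$, $\eta(e)$ is the number of $\delta$-instances of $M$ containing $e$. *)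

theory Defs
  imports "HOL-Probability.Probability"
begin

text \<open>A temporal edge (u, v, t): source, target, timestamp.
  The edge sequence E of a temporal graph is a list; edges are referred to by
  their position (index) in that list.\<close>

type_synonym 'v tedge = "'v \<times> 'v \<times> real"

definition src :: "'v tedge \<Rightarrow> 'v" where "src e = fst e"
definition dst :: "'v tedge \<Rightarrow> 'v" where "dst e = fst (snd e)"
definition ts  :: "'v tedge \<Rightarrow> real" where "ts e = snd (snd e)"

definition temporal_graph :: "'v set \<Rightarrow> 'v tedge list \<Rightarrow> bool" where
  "temporal_graph V E \<longleftrightarrow> finite V \<and>
     (\<forall>e\<in>set E. src e \<in> V \<and> dst e \<in> V \<and> ts e > 0) \<and> distinct (map ts E)"

definition motif_vertices :: "('w \<times> 'w) list \<Rightarrow> 'w set" where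
  "motif_vertices M = fst ` set M \<union> snd ` set M"

definition temporal_motif :: "('w \<times> 'w) list \<Rightarrow> bool" where
  "temporal_motif M \<longleftrightarrow> M \<noteq> [] \<and>
     (\<forall>a\<in>motif_vertices M. \<forall>b\<in>motif_vertices M. (a, b) \<in> (set M \<union> (set M)\<inverse>)\<^sup>*)"

definition inst_vertices :: "'v tedge list \<Rightarrow> nat list \<Rightarrow> 'v set" where
  "inst_vertices E S = (\<lambda>i. src (E ! i)) ` set S \<union> (\<lambda>i. dst (E ! i)) ` set S"

definition is_delta_instance ::
  "'v tedge list \<Rightarrow> ('w \<times> 'w) list \<Rightarrow> real \<Rightarrow> nat list \<Rightarrow> bool" where
  "is_delta_instance E M \<delta> S \<longleftrightarrow>
     length S = length M \<and> (\<forall>i\<in>set S. i < length E) \<and>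
     sorted_wrt (\<lambda>i j. ts (E ! i) < ts (E ! j)) S \<and>
     (\<exists>f :: 'v \<Rightarrow> 'w. bij_betw f (inst_vertices E S) (motif_vertices M) \<and>
        (\<forall>k<length M. f (src (E ! (S ! k))) = fst (M ! k) \<and> f (dst (E ! (S ! k))) = snd (M ! k))) \<and>
     ts (E ! last S) - ts (E ! hd S) \<le> \<delta>"

definition delta_instances :: "'v tedge list \<Rightarrow> ('w \<times> 'w) list \<Rightarrow> real \<Rightarrow> nat list set" where
  "delta_instances E M \<delta> = {S. is_delta_instance E M \<delta> S}"

definition motif_count :: "'v tedge list \<Rightarrow> ('w \<times> 'w) list \<Rightarrow> real \<Rightarrow> nat" where
  "motif_count E M \<delta> = card (delta_instances E M \<delta>)"

definition eta :: "'v tedge list \<Rightarrow> ('w \<times> 'w) list \<Rightarrow> real \<Rightarrow> nat \<Rightarrow> nat" where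
  "eta E M \<delta> i = card {S \<in> delta_instances E M \<delta>. i \<in> set S}"

text \<open>Independent edge sampling: edge i is kept iff \<omega> i.\<close>
definition edge_sample :: "nat \<Rightarrow> real \<Rightarrow> (nat \<Rightarrow> bool) pmf" where
  "edge_sample m p = Pi_pmf {..<m} False (\<lambda>_. bernoulli_pmf p)"

definition estimator ::
  "'v tedge list \<Rightarrow> ('w \<times> 'w) list \<Rightarrow> real \<Rightarrow> real \<Rightarrow> (nat \<Rightarrow> bool) \<Rightarrow> real" where
  "estimator E M \<delta> p \<omega> =
     (1 / (p * real (length M))) * (\<Sum>i\<in>{i. i < length E \<and> \<omega> i}. real (eta E M \<delta> i))"

end

theory Submission
  imports Defs
begin

text \<open>Proof idea: \<open>\<eta>\<close> counts each \<open>\<delta>\<close>-instance once for each of its \<open>l\<close> edges, so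
  \<open>\<Sum>\<^sub>e \<eta>(e) = l C\<^sub>M\<close>, and the estimator is \<open>1/p\<close> times the sum, over the sampled edges,
  of the weights \<open>h(e) = \<eta>(e)/l\<close>, an unbiased estimate of
  \<open>\<Sum>\<^sub>e h(e) = C\<^sub>M\<close>. Its variance is \<open>(1-p)/p \<Sum>\<^sub>e h(e)\<^sup>2 \<le> (1-p)/p C\<^sub>M\<^sup>2\<close> because
  the weights are nonnegative, and Chebyshev's inequality gives the bound.\<close>

lemma sum_squares_le_square_sum:
  fixes x :: "'a \<Rightarrow> 'b::linordered_idom"
  assumes "\<And>i. i \<in> A \<Longrightarrow> 0 \<le> x i"
  shows "(\<Sum>i\<in>A. x i ^ 2) \<le> (\<Sum>i\<in>A. x i) ^ 2"
proof (cases "finite A")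
  case True
  have "(\<Sum>i\<in>A. x i ^ 2) \<le> (\<Sum>i\<in>A. x i * (\<Sum>j\<in>A. x j))"
    using True assms
    by (intro sum_mono) (auto simp: power2_eq_square intro!: mult_left_mono member_le_sum)
  also have "\<dots> = (\<Sum>i\<in>A. x i) ^ 2"
    by (simp add: power2_eq_square sum_distrib_right)
  finally show ?thesis .
qed simp

lemma sum_card_lists_containing:
  fixes m :: nat
  assumes "finite D"
    and "\<And>S. S \<in> D \<Longrightarrow> distinct S \<and> set S \<subseteq> {..<m} \<and> length S = l"
  shows "(\<Sum>i<m. card {S \<in> D. i \<in> set S}) = l * card D"
proof -
  have "(\<Sum>i<m. card {S \<in> D. i \<in> set S}) = (\<Sum>i<m. \<Sum>S\<in>D. of_bool (i \<in> set S))"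
    using assms(1) by (simp add: sum.If_cases Collect_conj_eq Int_commute)
  also have "\<dots> = (\<Sum>S\<in>D. \<Sum>i<m. of_bool (i \<in> set S))"
    by (rule sum.swap)
  also have "\<dots> = (\<Sum>S\<in>D. l)"
  proof (intro sum.cong refl)
    fix S assume "S \<in> D"
    with assms(2) have "distinct S" "set S \<subseteq> {..<m}" "length S = l"
      by auto
    then show "(\<Sum>i<m. of_bool (i \<in> set S)) = l"
      by (simp add: inf.absorb2 distinct_card)
  qed
  finally show ?thesis by simp
qed

lemma finite_set_pmf_edge_sample: "finite (set_pmf (edge_sample m p))"
  unfolding edge_sample_def by (rule finite_subset[OF set_Pi_pmf_subset']) auto

lemma integrable_edge_sample [simp, intro]:
  "integrable (measure_pmf (edge_sample m p)) (f :: _ \<Rightarrow> real)"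
  by (rule integrable_measure_pmf_finite[OF finite_set_pmf_edge_sample])

lemma expectation_edge_sample_prod:
  assumes "S \<subseteq> {..<m}" "0 \<le> p" "p \<le> 1"
  shows "measure_pmf.expectation (edge_sample m p) (\<lambda>\<omega>. \<Prod>i\<in>S. of_bool (\<omega> i) :: real)
           = p ^ card S"
proof -
  let ?g = "\<lambda>i b. if i \<in> S then of_bool b else 1 :: real"
  have "(\<lambda>\<omega>. \<Prod>i\<in>S. of_bool (\<omega> i) :: real) = (\<lambda>\<omega>. \<Prod>i<m. ?g i (\<omega> i))"
    using assms(1) by (simp add: prod.If_cases Int_absorb1)
  then have "measure_pmf.expectation (edge_sample m p) (\<lambda>\<omega>. \<Prod>i\<in>S. of_bool (\<omega> i) :: real)
      = (\<Prod>i<m. measure_pmf.expectation (bernoulli_pmf p) (?g i))"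
    unfolding edge_sample_def
    by (simp only:) (rule expectation_prod_Pi_pmf; auto intro!: integrable_measure_pmf_finite)
  also have "\<dots> = (\<Prod>i<m. if i \<in> S then p else 1)"
    using assms(2,3) by (intro prod.cong) auto
  also have "\<dots> = p ^ card S"
    using assms(1) by (simp add: prod.If_cases Int_absorb1)
  finally show ?thesis .
qed

lemma expectation_edge_sample_centered_product:
  assumes "i < m" "j < m" "0 \<le> p" "p \<le> 1"
  shows "measure_pmf.expectation (edge_sample m p)
           (\<lambda>\<omega>. (of_bool (\<omega> i) - p) * (of_bool (\<omega> j) - p) :: real)
         = (if i = j then p - p\<^sup>2 else 0)"
proof -
  let ?E = "measure_pmf.expectation (edge_sample m p)"
  have mean: "?E (\<lambda>\<omega>. of_bool (\<omega> k)) = p" if "k < m" for k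
    using expectation_edge_sample_prod[of "{k}" m p] that assms by simp
  have product: "?E (\<lambda>\<omega>. of_bool (\<omega> i) * of_bool (\<omega> j)) = (if i = j then p else p\<^sup>2)"
  proof (cases "i = j")
    case True
    then have "(\<lambda>\<omega>. of_bool (\<omega> i) * of_bool (\<omega> j) :: real) = (\<lambda>\<omega>. of_bool (\<omega> i))"
      by auto
    then show ?thesis using True mean assms(1) by simp
  next
    case False
    then show ?thesis
      using expectation_edge_sample_prod[of "{i, j}" m p] assms by (simp add: power2_eq_square)
  qed
  have "(\<lambda>\<omega>. (of_bool (\<omega> i) - p) * (of_bool (\<omega> j) - p) :: real) =
        (\<lambda>\<omega>. of_bool (\<omega> i) * of_bool (\<omega> j) - p * of_bool (\<omega> i) - p * of_bool (\<omega> j) + p * p)"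
    by (auto simp: algebra_simps)
  then show ?thesis
    using mean assms(1,2) product by (simp add: power2_eq_square)
qed

lemma expectation_edge_sample_weighted_deviation_square:
  fixes h :: "nat \<Rightarrow> real"
  assumes "0 \<le> p" "p \<le> 1"
  shows "measure_pmf.expectation (edge_sample m p)
           (\<lambda>\<omega>. (\<Sum>i<m. h i * (of_bool (\<omega> i) - p))\<^sup>2)
         = (p - p\<^sup>2) * (\<Sum>i<m. (h i)\<^sup>2)"
proof -
  let ?E = "measure_pmf.expectation (edge_sample m p)"
  have "(\<lambda>\<omega>. (\<Sum>i<m. h i * (of_bool (\<omega> i) - p))\<^sup>2) =
        (\<lambda>\<omega>. \<Sum>i<m. \<Sum>j<m. h i * h j * ((of_bool (\<omega> i) - p) * (of_bool (\<omega> j) - p)))"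
    by (auto simp: power2_eq_square sum_product algebra_simps)
  then have "?E (\<lambda>\<omega>. (\<Sum>i<m. h i * (of_bool (\<omega> i) - p))\<^sup>2) =
      (\<Sum>i<m. \<Sum>j<m. h i * h j * ?E (\<lambda>\<omega>. (of_bool (\<omega> i) - p) * (of_bool (\<omega> j) - p)))"
    by simp
  also have "\<dots> = (\<Sum>i<m. \<Sum>j<m. h i * h j * (if i = j then p - p\<^sup>2 else 0))"
    using assms by (intro sum.cong refl) (simp add: expectation_edge_sample_centered_product)
  also have "\<dots> = (p - p\<^sup>2) * (\<Sum>i<m. (h i)\<^sup>2)"
    by (simp add: if_distrib power2_eq_square sum_distrib_left mult.commute cong: if_cong)
  finally show ?thesis .
qed

lemma prob_sampled_sum_deviation_le:
  fixes h :: "nat \<Rightarrow> real"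
  assumes "0 < p" "p \<le> 1" "0 < \<epsilon>"
    and nonneg: "\<And>i. 0 \<le> h i"
    and total_pos: "0 < (\<Sum>i<m. h i)"
  shows "measure_pmf.prob (edge_sample m p)
           {\<omega>. \<bar>(\<Sum>i\<in>{i. i < m \<and> \<omega> i}. h i) / p - (\<Sum>i<m. h i)\<bar> \<ge> \<epsilon> * (\<Sum>i<m. h i)}
         \<le> (1 - p) / (p * \<epsilon>\<^sup>2)"
proof -
  let ?Q = "edge_sample m p"
  define T where "T = (\<Sum>i<m. h i)"
  define Y where "Y \<omega> = (\<Sum>i<m. h i * (of_bool (\<omega> i) - p))" for \<omega> :: "nat \<Rightarrow> bool"
  have deviation: "(\<Sum>i\<in>{i. i < m \<and> \<omega> i}. h i) / p - T = Y \<omega> / p" for \<omega>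
  proof -
    have "(\<Sum>i\<in>{i. i < m \<and> \<omega> i}. h i) = (\<Sum>i<m. h i * of_bool (\<omega> i))"
      by (simp add: sum.inter_filter[symmetric] sum.If_cases Collect_conj_eq lessThan_def)
    then show ?thesis
      using assms(1)
      by (simp add: Y_def T_def field_simps sum_subtractf sum_distrib_left sum_divide_distrib)
  qed
  have "\<epsilon> * T > 0" using assms(3) total_pos by (simp add: T_def)
  then have "measure_pmf.prob ?Q {\<omega>. \<bar>(\<Sum>i\<in>{i. i < m \<and> \<omega> i}. h i) / p - T\<bar> \<ge> \<epsilon> * T}
      \<le> measure_pmf.expectation ?Q (\<lambda>\<omega>. (Y \<omega> / p)\<^sup>2) / (\<epsilon> * T)\<^sup>2"
    using measure_pmf.second_moment_method[where M = ?Q and a = "\<epsilon> * T"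
        and f = "\<lambda>\<omega>. (\<Sum>i\<in>{i. i < m \<and> \<omega> i}. h i) / p - T"]
    by (simp add: deviation)
  also have "measure_pmf.expectation ?Q (\<lambda>\<omega>. (Y \<omega> / p)\<^sup>2) = (p - p\<^sup>2) * (\<Sum>i<m. (h i)\<^sup>2) / p\<^sup>2"
    using assms(1,2) expectation_edge_sample_weighted_deviation_square[of p m h]
    by (simp add: Y_def power_divide)
  also have "\<dots> \<le> (p - p\<^sup>2) * T\<^sup>2 / p\<^sup>2"
    using assms(1,2) nonneg sum_squares_le_square_sum[of "{..<m}" h]
    by (intro divide_right_mono mult_left_mono) (auto simp: T_def power2_eq_square)
  also have "(p - p\<^sup>2) * T\<^sup>2 / p\<^sup>2 / (\<epsilon> * T)\<^sup>2 = (1 - p) / (p * \<epsilon>\<^sup>2)"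
    using assms(1,3) total_pos by (simp add: T_def field_simps power2_eq_square)
  finally show ?thesis
    using \<open>\<epsilon> * T > 0\<close> by (simp add: T_def divide_right_mono)
qed

lemma sorted_wrt_irrefl_imp_distinct:
  "sorted_wrt R xs \<Longrightarrow> (\<And>x. \<not> R x x) \<Longrightarrow> distinct xs"
  by (induction xs) auto

lemma delta_instance_shape:
  assumes "S \<in> delta_instances E M \<delta>"
  shows "distinct S \<and> set S \<subseteq> {..<length E} \<and> length S = length M"
  using assms
  unfolding delta_instances_def is_delta_instance_def
  by (auto intro: sorted_wrt_irrefl_imp_distinct)

lemma finite_delta_instances: "finite (delta_instances E M \<delta>)"
  by (rule finite_subset[of _ "{xs. set xs \<subseteq> {..<length E} \<and> length xs = length M}"])
     (auto dest: delta_instance_shape intro: finite_lists_length_eq)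

lemma sum_eta_eq_length_times_motif_count:
  "(\<Sum>i<length E. eta E M \<delta> i) = length M * motif_count E M \<delta>"
  unfolding eta_def motif_count_def
  by (rule sum_card_lists_containing[OF finite_delta_instances delta_instance_shape])

theorem theorem3:
  fixes V :: "'v set" and E :: "'v tedge list" and M :: "('w \<times> 'w) list"
    and \<delta> p \<epsilon> :: real
  assumes "temporal_graph V E"
    and "temporal_motif M"
    and "\<delta> \<ge> 0"
    and "0 < p" and "p \<le> 1"
    and "\<epsilon> > 0"
    and "motif_count E M \<delta> > 0"
  shows "measure_pmf.prob (edge_sample (length E) p)
           {\<omega>. \<bar>estimator E M \<delta> p \<omega> - real (motif_count E M \<delta>)\<bar>
                 \<ge> \<epsilon> * real (motif_count E M \<delta>)}
         \<le> (1 - p) / (p * \<epsilon>\<^sup>2)"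
proof -
  define h where "h i = real (eta E M \<delta> i) / real (length M)" for i
  have "length M > 0"
    using assms(2) by (simp add: temporal_motif_def)
  then have total: "(\<Sum>i<length E. h i) = real (motif_count E M \<delta>)"
    using arg_cong[OF sum_eta_eq_length_times_motif_count, of real E M \<delta>]
    by (simp add: h_def sum_divide_distrib[symmetric])
  have "estimator E M \<delta> p \<omega> = (\<Sum>i\<in>{i. i < length E \<and> \<omega> i}. h i) / p" for \<omega>
    by (simp add: estimator_def h_def sum_divide_distrib[symmetric])
  moreover note prob_sampled_sum_deviation_le[of p \<epsilon> h "length E", unfolded total]
  ultimately show ?thesis
    using assms(4-7) by (simp add: h_def)
qed

end
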